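(* Let $\mathcal{X}$ be a separable infinite-dimensional complex Banach space, let $T\in\mathcal{B}(\mathcal{X})$ be a diskcyclic operator with diskcyclic vector $x$, and let $I$ be the identity operator on $\mathbb{C}^2$. Put $S=T\oplus I\in\mathcal{B}(\mathcal{X}\oplus\mathbb{C}^2)$ and $\mathcal{N}=\mathcal{X}\oplus\{0\}$. Then $S$ is not diskcyclic on $\mathcal{X}\oplus\mathbb{C}^2$, but $S$ is $\mathcal{N}$-diskcyclic and $(x,0)$ is an $\mathcal{N}$-diskcyclic vector for $S$.
   Context: $\mathbb{D}=\{\alpha\in\mathbb{C}:|\alpha|\le 1\}$. For $T\in\mathcal{B}(\mathcal{X})$ and $x\in\mathcal{X}$, the disk orbit is $\mathbb{D}\mathrm{Orb}(T,x)=\{\alpha T^nx:\alpha\in\mathbb{D},\ n\in\{0,1,2,\dots\}\}$. $T$ is diskcyclic if $\mathbb{D}\mathrm{Orb}(T,x)$ is dense in $\mathcal{X}$ for some $x$ (a diskcyclic vector). For a closed subspace $\mathcal{M}$ (nontrivial: $\mathcal{M}\ne\{0\}$, $\mathcal{M}\ne$ whole space), $T$ is $\mathcal{M}$-diskcyclic if there is a vector $x$ (an $\mathcal{M}$-diskcyclic vector) such that $\mathbb{D}\mathrm{Orb}(T,x)\cap\mathcal{M}$ is dense in $\mathcal{M}$. *)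

theory Defs
  imports "HOL-Analysis.Analysis"
begin

text \<open>HOL-Analysis only provides real normed spaces. A complex Banach space is a
real Banach space together with a complex scalar multiplication extending the real
one and compatible with the norm.\<close>

class cbanach = banach +
  fixes scaleC :: "complex \<Rightarrow> 'a \<Rightarrow> 'a"  (infixr "*\<^sub>C" 75)
  assumes scaleC_add_right: "a *\<^sub>C (x + y) = a *\<^sub>C x + a *\<^sub>C y"
    and scaleC_add_left: "(a + b) *\<^sub>C x = a *\<^sub>C x + b *\<^sub>C x"
    and scaleC_scaleC: "a *\<^sub>C (b *\<^sub>C x) = (a * b) *\<^sub>C x"
    and scaleC_one: "1 *\<^sub>C x = x"
    and scaleR_scaleC: "r *\<^sub>R x = complex_of_real r *\<^sub>C x"
    and norm_scaleC: "norm (a *\<^sub>C x) = cmod a * norm x"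

instantiation complex :: cbanach
begin
definition scaleC_complex :: "complex \<Rightarrow> complex \<Rightarrow> complex" where
  "scaleC_complex a x = a * x"
instance
  by standard (auto simp: scaleC_complex_def algebra_simps norm_mult scaleR_conv_of_real)
end

instantiation prod :: (cbanach, cbanach) cbanach
begin
definition scaleC_prod :: "complex \<Rightarrow> 'a \<times> 'b \<Rightarrow> 'a \<times> 'b" where
  "scaleC_prod a p = (a *\<^sub>C fst p, a *\<^sub>C snd p)"
instance
proof
  fix a b :: complex and x y :: "'a \<times> 'b" and r :: real
  show "a *\<^sub>C (x + y) = a *\<^sub>C x + a *\<^sub>C y"
    by (simp add: scaleC_prod_def scaleC_add_right)
  show "(a + b) *\<^sub>C x = a *\<^sub>C x + b *\<^sub>C x"
    by (simp add: scaleC_prod_def scaleC_add_left)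
  show "a *\<^sub>C (b *\<^sub>C x) = (a * b) *\<^sub>C x"
    by (simp add: scaleC_prod_def scaleC_scaleC)
  show "1 *\<^sub>C x = x"
    by (simp add: scaleC_prod_def scaleC_one)
  show "r *\<^sub>R x = complex_of_real r *\<^sub>C x"
    by (simp add: scaleC_prod_def scaleR_scaleC prod_eq_iff)
  have "(norm (a *\<^sub>C x))\<^sup>2 = (cmod a * norm x)\<^sup>2"
    by (simp add: scaleC_prod_def norm_prod_def norm_scaleC power_mult_distrib
        algebra_simps)
  then show "norm (a *\<^sub>C x) = cmod a * norm x"
    by (simp add: power2_eq_iff_nonneg)
qed
end

definition bounded_clinear_op :: "('a::cbanach \<Rightarrow> 'a) \<Rightarrow> bool" where
  "bounded_clinear_op T \<longleftrightarrow> bounded_linear T \<and> (\<forall>a x. T (a *\<^sub>C x) = a *\<^sub>C T x)"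

definition cspan :: "'a::cbanach set \<Rightarrow> 'a set" where
  "cspan B = {\<Sum>v\<in>F. c v *\<^sub>C v | F c. finite F \<and> F \<subseteq> B}"

definition infinite_dim_complex :: "'a::cbanach itself \<Rightarrow> bool" where
  "infinite_dim_complex _ \<longleftrightarrow> \<not> (\<exists>B::'a set. finite B \<and> cspan B = UNIV)"

definition separable_type :: "'a::topological_space itself \<Rightarrow> bool" where
  "separable_type _ \<longleftrightarrow> (\<exists>D::'a set. countable D \<and> closure D = UNIV)"

definition closed_csubspace :: "'a::cbanach set \<Rightarrow> bool" where
  "closed_csubspace M \<longleftrightarrow> closed M \<and> 0 \<in> M \<and> (\<forall>x\<in>M. \<forall>y\<in>M. x + y \<in> M)
     \<and> (\<forall>a. \<forall>x\<in>M. a *\<^sub>C x \<in> M)"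

definition closed_unit_disk :: "complex set" where
  "closed_unit_disk = {\<alpha>. cmod \<alpha> \<le> 1}"

definition DOrb :: "('a::cbanach \<Rightarrow> 'a) \<Rightarrow> 'a \<Rightarrow> 'a set" where
  "DOrb T x = {\<alpha> *\<^sub>C (T ^^ n) x | \<alpha> n. \<alpha> \<in> closed_unit_disk}"

definition diskcyclic_vector :: "('a::cbanach \<Rightarrow> 'a) \<Rightarrow> 'a \<Rightarrow> bool" where
  "diskcyclic_vector T x \<longleftrightarrow> closure (DOrb T x) = UNIV"

definition diskcyclic :: "('a::cbanach \<Rightarrow> 'a) \<Rightarrow> bool" where
  "diskcyclic T \<longleftrightarrow> (\<exists>x. diskcyclic_vector T x)"

definition M_diskcyclic_vector :: "('a::cbanach \<Rightarrow> 'a) \<Rightarrow> 'a set \<Rightarrow> 'a \<Rightarrow> bool" where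
  "M_diskcyclic_vector T M x \<longleftrightarrow>
     closed_csubspace M \<and> M \<noteq> {0} \<and> M \<noteq> UNIV \<and> M \<subseteq> closure (DOrb T x \<inter> M)"

definition M_diskcyclic :: "('a::cbanach \<Rightarrow> 'a) \<Rightarrow> 'a set \<Rightarrow> bool" where
  "M_diskcyclic T M \<longleftrightarrow> (\<exists>x. M_diskcyclic_vector T M x)"

end

theory Submission
  imports Defs
begin

text \<open>
  Write \<open>T \<oplus> I\<close> for the operator \<open>(y, v) \<mapsto> (T y, v)\<close> on \<open>X \<times> Y\<close>.
  Its iterates are \<open>T\<^sup>n \<oplus> I\<close>, so every point of the disk orbit of \<open>(y, v)\<close> has second
  component \<open>\<alpha> v\<close> with \<open>|\<alpha>| \<le> 1\<close>, hence of norm at most \<open>\<parallel>v\<parallel>\<close>.  The disk orbit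
  therefore lies in the closed set \<open>X \<times> cball 0 \<parallel>v\<parallel>\<close>, which is a proper subset of
  \<open>X \<times> Y\<close> whenever \<open>Y \<noteq> {0}\<close>: so \<open>T \<oplus> I\<close> is never diskcyclic.
  On the other hand, the disk orbit of \<open>(x, 0)\<close> is exactly \<open>DOrb T x \<times> {0}\<close>, which
  is dense in \<open>N = X \<times> {0}\<close> as soon as \<open>x\<close> is diskcyclic for \<open>T\<close>; and \<open>N\<close> is a
  nontrivial closed subspace when both factors are nonzero.
\<close>

definition sum_with_identity :: "('a \<Rightarrow> 'a) \<Rightarrow> 'a \<times> 'b \<Rightarrow> 'a \<times> 'b" where
  "sum_with_identity T = (\<lambda>(y, v). (T y, v))"

lemma scaleC_zero [simp]: "a *\<^sub>C (0::'a::cbanach) = 0"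
proof -
  have "norm (a *\<^sub>C (0::'a)) = 0" by (simp add: norm_scaleC)
  then show ?thesis by simp
qed

lemma infinite_dim_complex_nonzero:
  assumes "infinite_dim_complex TYPE('a::cbanach)"
  shows "\<exists>y::'a. y \<noteq> 0"
proof (rule ccontr)
  assume "\<not> (\<exists>y::'a. y \<noteq> 0)"
  then have "cspan ({}::'a set) = UNIV" unfolding cspan_def by auto
  then show False using assms unfolding infinite_dim_complex_def by blast
qed

lemma sum_with_identity_funpow:
  "(sum_with_identity T ^^ n) (y, v) = ((T ^^ n) y, v)"
  by (induction n) (simp_all add: sum_with_identity_def)

lemma DOrb_sum_with_identity_bounded:
  fixes T :: "'a::cbanach \<Rightarrow> 'a" and v :: "'b::cbanach"
  shows "DOrb (sum_with_identity T) (y, v) \<subseteq> UNIV \<times> cball 0 (norm v)"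
proof
  fix p assume "p \<in> DOrb (sum_with_identity T) (y, v)"
  then obtain \<alpha> n where "cmod \<alpha> \<le> 1" and p: "p = \<alpha> *\<^sub>C ((T ^^ n) y, v)"
    unfolding DOrb_def closed_unit_disk_def sum_with_identity_funpow by blast
  then have "cmod \<alpha> * norm v \<le> norm v"
    by (simp add: mult_left_le_one_le)
  then show "p \<in> UNIV \<times> cball 0 (norm v)"
    by (simp add: p scaleC_prod_def norm_scaleC)
qed

text \<open>Hence \<open>T \<oplus> I\<close> is not diskcyclic whenever the second factor is nonzero
  (perfect spaces are unbounded, so the closed ball is a proper subset).\<close>
lemma sum_with_identity_not_diskcyclic:
  fixes T :: "'a::cbanach \<Rightarrow> 'a"
  shows "\<not> diskcyclic (sum_with_identity T :: 'a \<times> 'b::{cbanach, perfect_space} \<Rightarrow> _)"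
proof
  assume "diskcyclic (sum_with_identity T :: 'a \<times> 'b \<Rightarrow> _)"
  then obtain y and v :: 'b where dense: "closure (DOrb (sum_with_identity T) (y, v)) = UNIV"
    unfolding diskcyclic_def diskcyclic_vector_def by auto
  have "closed (UNIV \<times> cball (0::'b) (norm v) :: ('a \<times> 'b) set)"
    by (simp add: closed_Times)
  then have "(UNIV :: ('a \<times> 'b) set) \<subseteq> UNIV \<times> cball 0 (norm v)"
    using closure_minimal[OF DOrb_sum_with_identity_bounded] dense by metis
  then have "(UNIV :: 'b set) \<subseteq> cball 0 (norm v)" by auto
  then show False
    using not_bounded_UNIV bounded_cball bounded_subset by blast
qed

lemma closed_csubspace_first_factor:
  "closed_csubspace (UNIV \<times> {0} :: ('a::cbanach \<times> 'b::cbanach) set)"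
  unfolding closed_csubspace_def
  by (auto simp: closed_Times zero_prod_def scaleC_prod_def)

lemma DOrb_sum_with_identity_first_factor:
  fixes T :: "'a::cbanach \<Rightarrow> 'a"
  shows "DOrb (sum_with_identity T) (x, 0) \<inter> UNIV \<times> {0} = DOrb T x \<times> {0::'b::cbanach}"
  unfolding DOrb_def sum_with_identity_funpow
  by (auto simp: scaleC_prod_def)

text \<open>A diskcyclic vector \<open>x\<close> of \<open>T\<close> yields the \<open>X \<times> {0}\<close>-diskcyclic vector \<open>(x, 0)\<close>
  of \<open>T \<oplus> I\<close>, provided both factors are nonzero so that \<open>X \<times> {0}\<close> is nontrivial.\<close>
lemma sum_with_identity_M_diskcyclic_vector:
  fixes T :: "'a::cbanach \<Rightarrow> 'a" and y :: 'a and w :: "'b::cbanach"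
  assumes "diskcyclic_vector T x" and "y \<noteq> 0" and "w \<noteq> 0"
  shows "M_diskcyclic_vector (sum_with_identity T) (UNIV \<times> {0} :: ('a \<times> 'b) set) (x, 0)"
proof -
  have "(y, 0) \<in> (UNIV \<times> {0} :: ('a \<times> 'b) set)" "(y, 0) \<noteq> (0 :: 'a \<times> 'b)"
    using assms(2) by (auto simp: zero_prod_def)
  then have nonzero: "(UNIV \<times> {0} :: ('a \<times> 'b) set) \<noteq> {0}" by blast
  have proper: "(UNIV \<times> {0} :: ('a \<times> 'b) set) \<noteq> UNIV"
    using assms(3) by auto
  have "closure (DOrb (sum_with_identity T) (x, 0) \<inter> UNIV \<times> {0}) = (UNIV \<times> {0} :: ('a \<times> 'b) set)"
    using assms(1) unfolding DOrb_sum_with_identity_first_factor closure_Times diskcyclic_vector_def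
    by simp
  then show ?thesis
    unfolding M_diskcyclic_vector_def
    using closed_csubspace_first_factor nonzero proper by simp
qed

theorem mainTheorem1:
  fixes T :: "'a::cbanach \<Rightarrow> 'a" and x :: 'a
  assumes "separable_type TYPE('a)"
    and "infinite_dim_complex TYPE('a)"
    and "bounded_clinear_op T"
    and "diskcyclic_vector T x"
  defines "S \<equiv> (\<lambda>(y, v). (T y, id v)) :: 'a \<times> (complex \<times> complex) \<Rightarrow> 'a \<times> (complex \<times> complex)"
    and "N \<equiv> {(y, v). v = (0::complex \<times> complex)} :: ('a \<times> (complex \<times> complex)) set"
  shows "\<not> diskcyclic S \<and> M_diskcyclic S N \<and> M_diskcyclic_vector S N (x, 0)"
proof -
  have S: "S = sum_with_identity T" and N: "N = UNIV \<times> {0}"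
    unfolding S_def N_def sum_with_identity_def by auto
  obtain y :: 'a where "y \<noteq> 0"
    using infinite_dim_complex_nonzero[OF assms(2)] by blast
  moreover have "(1, 0) \<noteq> (0 :: complex \<times> complex)" by (simp add: zero_prod_def)
  ultimately have vector: "M_diskcyclic_vector S N (x, 0)"
    unfolding S N using sum_with_identity_M_diskcyclic_vector[OF assms(4)] by blast
  then show ?thesis
    using sum_with_identity_not_diskcyclic[of T] unfolding S M_diskcyclic_def by blast
qed

end
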